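(* Let $\lambda$ be a partition of $k$ and $\lambda'$ a partition of $k'$. Then every $S_\lambda$-$k$-colourable graph is $S_{\lambda'}$-$k'$-colourable if and only if $\lambda\le\lambda'$.
   Context: View a graph $G$ as a symmetric digraph: each edge $uv$ gives arcs $e=(u,v)$ and $e^{-1}=(v,u)$. For an inverse-closed set $S$ of permutations, an $S$-signature of $G$ is a map $\sigma$ from arcs to $S$ with $\sigma(e^{-1})=\sigma(e)^{-1}$. A $k$-colouring of $(G,\sigma)$ is a map $f:V(G)\to[k]$ with $\sigma(e)(f(x))\ne f(y)$ for every arc $e=(x,y)$; $G$ is $S$-$k$-colourable if $(G,\sigma)$ is $k$-colourable for every $S$-signature $\sigma$. For a partition $\lambda=\{k_1,\dots,k_q\}$ of $k$, let $s_0=0$, $s_j=s_{j-1}+k_j$, $I_j=\{s_{j-1}+1,\dots,s_j\}$, and let $S_\lambda$ be the set of permutations $\pi$ of $[k]$ with $\pi(I_j)=I_j$ for all $j$. A partition $\lambda'$ is a refinement of $\lambda$ if it is obtained from $\lambda$ by replacing some parts $k_i$ by multisets of positive integers summing to $k_i$. For $\lambda$ a partition of $k$ and $\lambda'$ a partition of $k'\ge k$, write $\lambda\le\lambda'$ if there is a partition $\lambda''$ of $k'$ obtained from $\lambda$ by increasing some of its parts such that $\lambda'$ is a refinement of $\lambda''$. *)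

theory Defs
  imports Main "HOL-Combinatorics.Permutations" "HOL-Library.Multiset"
begin

text \<open>Finite simple graphs with vertices in nat, viewed as symmetric digraphs:
  the arc set E is a symmetric irreflexive relation on the finite vertex set V.\<close>
definition finite_graph :: "nat set \<Rightarrow> (nat \<times> nat) set \<Rightarrow> bool" where
  "finite_graph V E \<longleftrightarrow> finite V \<and> E \<subseteq> V \<times> V \<and>
     (\<forall>u v. (u, v) \<in> E \<longrightarrow> (v, u) \<in> E) \<and> (\<forall>v. (v, v) \<notin> E)"

definition signature :: "(nat \<Rightarrow> nat) set \<Rightarrow> (nat \<times> nat) set \<Rightarrow> (nat \<times> nat \<Rightarrow> nat \<Rightarrow> nat) \<Rightarrow> bool" where
  "signature S E \<sigma> \<longleftrightarrow> (\<forall>e\<in>E. \<sigma> e \<in> S \<and> \<sigma> (snd e, fst e) = inv (\<sigma> e))"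

definition colouring :: "nat \<Rightarrow> nat set \<Rightarrow> (nat \<times> nat) set \<Rightarrow> (nat \<times> nat \<Rightarrow> nat \<Rightarrow> nat) \<Rightarrow> (nat \<Rightarrow> nat) \<Rightarrow> bool" where
  "colouring k V E \<sigma> f \<longleftrightarrow> (\<forall>v\<in>V. f v \<in> {1..k}) \<and>
     (\<forall>x y. (x, y) \<in> E \<longrightarrow> \<sigma> (x, y) (f x) \<noteq> f y)"

definition S_colourable :: "(nat \<Rightarrow> nat) set \<Rightarrow> nat \<Rightarrow> nat set \<Rightarrow> (nat \<times> nat) set \<Rightarrow> bool" where
  "S_colourable S k V E \<longleftrightarrow> (\<forall>\<sigma>. signature S E \<sigma> \<longrightarrow> (\<exists>f. colouring k V E \<sigma> f))"

definition is_partition :: "nat \<Rightarrow> nat list \<Rightarrow> bool" where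
  "is_partition k lam \<longleftrightarrow> (\<forall>x\<in>set lam. 0 < x) \<and> sum_list lam = k"

text \<open>The block I_(j+1) (0-indexed j) = {s_j + 1 .. s_(j+1)}.\<close>
definition block :: "nat list \<Rightarrow> nat \<Rightarrow> nat set" where
  "block lam j = {sum_list (take j lam) + 1 .. sum_list (take (Suc j) lam)}"

definition S_lambda :: "nat \<Rightarrow> nat list \<Rightarrow> (nat \<Rightarrow> nat) set" where
  "S_lambda k lam = {\<pi>. \<pi> permutes {1..k} \<and> (\<forall>j<length lam. \<pi> ` block lam j = block lam j)}"

text \<open>lam' is a refinement of lam: each part of lam is replaced by a nonempty multiset
  of positive integers summing to it (a part kept unchanged is replaced by itself).\<close>
definition refines :: "nat list \<Rightarrow> nat list \<Rightarrow> bool" where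
  "refines lam' lam \<longleftrightarrow> (\<exists>M :: nat multiset multiset.
     mset lam = image_mset sum_mset M \<and>
     (\<forall>A\<in>#M. A \<noteq> {#} \<and> (\<forall>x\<in>#A. 0 < x)) \<and>
     mset lam' = sum_mset M)"

definition partition_le :: "nat \<Rightarrow> nat list \<Rightarrow> nat \<Rightarrow> nat list \<Rightarrow> bool" where
  "partition_le k lam k' lam' \<longleftrightarrow> k \<le> k' \<and>
     (\<exists>lam''. length lam'' = length lam \<and> (\<forall>i<length lam. lam ! i \<le> lam'' ! i) \<and>
        is_partition k' lam'' \<and> refines lam' lam'')"

end

theory Submission
  imports Defs "HOL-Library.FuncSet" "HOL-Library.Countable" "HOL-Combinatorics.List_Permutation"
    "HOL-Library.Disjoint_Sets"
begin

text \<open>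
  By the definition of refinement, \<open>lam \<le> lam'\<close> holds iff some map \<open>h\<close> from the parts
  of \<open>lam'\<close> to the parts of \<open>lam\<close> is dominating: every part \<open>lam ! j\<close> is at most the
  total size of the parts sent to \<open>j\<close>.

  Given such an \<open>h\<close>, embed the \<open>j\<close>-th colour block of \<open>lam\<close> into the union of the
  \<open>lam'\<close>-blocks sent to \<open>j\<close>. Each permutation of \<open>S_lambda k' lam'\<close> preserves these
  unions and is therefore tracked by some permutation of \<open>S_lambda k lam\<close>; this turns every
  \<open>lam'\<close>-signature into a \<open>lam\<close>-signature whose colourings, composed with the embedding,
  colour the original one.

  Without a dominating map, consider the words of bounded length over the \<open>k'\<close> colours,
  each word having arcs to some of its prefixes, labelled by transpositions inside
  \<open>lam'\<close>-blocks. Positions are grouped into batches whose classes run cyclically through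
  the parts of \<open>lam\<close>. Reading off the colours of the prefixes of a colouring gives a colour
  sequence which, at every position, avoids the blocks that are heavy for other classes
  (and those heavy only for its own class, when these are few). The absence of a dominating
  map makes some class light in every round of batches, which creates a new heavy pair, so
  such sequences are short. On the other hand every word has fewer than \<open>lam ! j\<close> arcs
  to prefixes of its own class \<open>j\<close>, so colouring the words of class \<open>j\<close> greedily from the
  \<open>j\<close>-th block of \<open>lam\<close> always succeeds.
\<close>

section \<open>Blocks of a partition\<close>

lemma sum_list_take_mono:
  "i \<le> j \<Longrightarrow> sum_list (take i (xs :: nat list)) \<le> sum_list (take j xs)"
proof -
  assume "i \<le> j"
  then have "take j xs = take i xs @ take (j - i) (drop i xs)"
    by (metis le_add_diff_inverse take_add)
  then show ?thesis by simp
qed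

lemma block_disjoint: "i \<noteq> j \<Longrightarrow> block lam i \<inter> block lam j = {}"
proof -
  have "block lam i \<inter> block lam j = {}" if "i < j" for i j
    using that sum_list_take_mono[of "Suc i" j lam] by (auto simp: block_def)
  then show "i \<noteq> j \<Longrightarrow> ?thesis" by (metis inf_commute linorder_neqE_nat)
qed

lemma card_block: "j < length lam \<Longrightarrow> card (block lam j) = lam ! j"
  by (simp add: block_def take_Suc_conv_app_nth)

lemma finite_block [simp]: "finite (block lam j)"
  by (simp add: block_def)

lemma block_subset: "j < length lam \<Longrightarrow> block lam j \<subseteq> {1..sum_list lam}"
  using sum_list_take_mono[of "Suc j" "length lam" lam] by (auto simp: block_def)

lemma ex_block: "c \<in> {1..sum_list lam} \<Longrightarrow> \<exists>j<length lam. c \<in> block lam j"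
proof (induction lam rule: rev_induct)
  case (snoc x xs)
  show ?case
  proof (cases "c \<le> sum_list xs")
    case True
    with snoc obtain j where "j < length xs" "c \<in> block xs j" by auto
    then show ?thesis by (intro exI[of _ j]) (auto simp: block_def)
  next
    case False
    then show ?thesis using snoc.prems by (intro exI[of _ "length xs"]) (auto simp: block_def)
  qed
qed simp

lemma UN_block: "(\<Union>j<length lam. block lam j) = {1..sum_list lam}"
proof
  show "(\<Union>j<length lam. block lam j) \<subseteq> {1..sum_list lam}"
    using block_subset by (simp add: UN_subset_iff)
  show "{1..sum_list lam} \<subseteq> (\<Union>j<length lam. block lam j)"
    using ex_block by (auto simp: subset_iff)
qed

definition block_of :: "nat list \<Rightarrow> nat \<Rightarrow> nat" where
  "block_of lam c = (THE j. j < length lam \<and> c \<in> block lam j)"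

lemma block_of_eqI: "j < length lam \<Longrightarrow> c \<in> block lam j \<Longrightarrow> block_of lam c = j"
  unfolding block_of_def by (rule the_equality) (use block_disjoint in blast)+

lemma block_of_less: "c \<in> {1..sum_list lam} \<Longrightarrow> block_of lam c < length lam"
  using ex_block block_of_eqI by metis

lemma mem_block_block_of: "c \<in> {1..sum_list lam} \<Longrightarrow> c \<in> block lam (block_of lam c)"
  using ex_block block_of_eqI by metis

section \<open>Dominating maps\<close>

definition fibre_sum :: "nat list \<Rightarrow> (nat \<Rightarrow> nat) \<Rightarrow> nat \<Rightarrow> nat" where
  "fibre_sum ys h j = (\<Sum>b | b < length ys \<and> h b = j. ys ! b)"

definition maps_into :: "nat list \<Rightarrow> nat list \<Rightarrow> (nat \<Rightarrow> nat) \<Rightarrow> bool" where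
  "maps_into ys xs h \<longleftrightarrow> (\<forall>b<length ys. h b < length xs)"

definition dominating_map :: "nat list \<Rightarrow> nat list \<Rightarrow> (nat \<Rightarrow> nat) \<Rightarrow> bool" where
  "dominating_map lam lam' h \<longleftrightarrow>
     maps_into lam' lam h \<and> (\<forall>j<length lam. lam ! j \<le> fibre_sum lam' h j)"

lemma fibre_sum_reindex:
  assumes "bij_betw \<pi> {..<length ys} {..<length zs}" "\<forall>i<length ys. ys ! i = zs ! \<pi> i"
  shows "fibre_sum ys (h \<circ> \<pi>) j = fibre_sum zs h j"
proof -
  have "bij_betw \<pi> {b. b < length ys \<and> h (\<pi> b) = j} {c. c < length zs \<and> h c = j}"
    using assms(1) unfolding bij_betw_def inj_on_def by (auto simp: image_iff lessThan_def)
  then have "(\<Sum>b | b < length ys \<and> h (\<pi> b) = j. zs ! \<pi> b) = fibre_sum zs h j"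
    unfolding fibre_sum_def by (rule sum.reindex_bij_betw)
  moreover have "fibre_sum ys (h \<circ> \<pi>) j = (\<Sum>b | b < length ys \<and> h (\<pi> b) = j. zs ! \<pi> b)"
    unfolding fibre_sum_def by (rule sum.cong) (simp_all add: assms(2))
  ultimately show ?thesis by (rule trans[rotated])
qed

lemma fibre_sum_append:
  fixes ys zs :: "nat list" and h :: "nat \<Rightarrow> nat"
  defines "h' \<equiv> \<lambda>b. if b < length ys then 0 else Suc (h (b - length ys))"
  shows "fibre_sum (ys @ zs) h' 0 = sum_list ys"
    and "fibre_sum (ys @ zs) h' (Suc j) = fibre_sum zs h j"
proof -
  have "{b. b < length (ys @ zs) \<and> h' b = 0} = {..<length ys}"
    by (auto simp: h'_def)
  then show "fibre_sum (ys @ zs) h' 0 = sum_list ys"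
    by (simp add: fibre_sum_def nth_append sum_list_sum_nth atLeast0LessThan)
  have "{b. b < length (ys @ zs) \<and> h' b = Suc j} =
      (\<lambda>b. b + length ys) ` {b. b < length zs \<and> h b = j}"
  proof (intro set_eqI iffI)
    fix b assume "b \<in> {b. b < length (ys @ zs) \<and> h' b = Suc j}"
    then show "b \<in> (\<lambda>b. b + length ys) ` {b. b < length zs \<and> h b = j}"
      by (auto simp: h'_def image_iff intro!: exI[of _ "b - length ys"] split: if_splits)
  qed (auto simp: h'_def)
  then show "fibre_sum (ys @ zs) h' (Suc j) = fibre_sum zs h j"
    by (simp add: fibre_sum_def sum.reindex inj_on_def nth_append)
qed

lemma refines_imp_fibre_map:
  assumes "mset xs = image_mset sum_mset M" "mset ys = sum_mset M"
  shows "\<exists>h. maps_into ys xs h \<and> (\<forall>j<length xs. fibre_sum ys h j = xs ! j)"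
  using assms
proof (induction xs arbitrary: M ys)
  case Nil
  then show ?case by (simp add: maps_into_def)
next
  case (Cons x xs)
  from image_mset_eq_plusD[of sum_mset M "{#x#}" "mset xs"] Cons.prems(1)
  obtain B C where BC: "M = B + C" "{#x#} = image_mset sum_mset B" "mset xs = image_mset sum_mset C"
    by auto
  moreover have "size B = 1"
    using BC(2) by (metis size_image_mset size_single)
  ultimately obtain A where A: "B = {#A#}" "sum_mset A = x"
    by (metis image_mset_single size_1_singleton_mset single_eq_single)
  obtain ys1 ys2 where ys1: "mset ys1 = A" and ys2: "mset ys2 = sum_mset C"
    using ex_mset by metis
  obtain h where h: "maps_into ys2 xs h" "\<forall>j<length xs. fibre_sum ys2 h j = xs ! j"
    using Cons.IH[OF BC(3) ys2] by blast
  define h' where "h' b = (if b < length ys1 then 0 else Suc (h (b - length ys1)))" for b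
  have "mset ys = mset (ys1 @ ys2)"
    using Cons.prems(2) BC A ys1 ys2 by simp
  from permutation_Ex_bij[OF this] obtain \<pi> where
    \<pi>: "bij_betw \<pi> {..<length ys} {..<length (ys1 @ ys2)}" "\<forall>i<length ys. ys ! i = (ys1 @ ys2) ! \<pi> i"
    by blast
  have "maps_into ys (x # xs) (h' \<circ> \<pi>)"
  proof (unfold maps_into_def, intro allI impI)
    fix b assume "b < length ys"
    then have "\<pi> b < length ys1 + length ys2" using \<pi>(1) by (auto simp: bij_betw_def)
    then show "(h' \<circ> \<pi>) b < length (x # xs)" using h(1) by (auto simp: maps_into_def h'_def)
  qed
  moreover have "fibre_sum ys (h' \<circ> \<pi>) j = (x # xs) ! j" if "j < length (x # xs)" for j
  proof -
    have "sum_list ys1 = x" using ys1 A by (metis sum_mset_sum_list)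
    then show ?thesis unfolding fibre_sum_reindex[OF \<pi>] h'_def
      using fibre_sum_append that h(2) by (cases j) auto
  qed
  ultimately show ?case by blast
qed

lemma sum_fibre_sum:
  assumes "maps_into ys xs h"
  shows "(\<Sum>j<length xs. fibre_sum ys h j) = sum_list ys"
proof -
  have "(\<Sum>j<length xs. fibre_sum ys h j) = (\<Sum>b<length ys. ys ! b)"
    unfolding fibre_sum_def using assms
    by (subst sum.group[symmetric, where g = h]) (auto simp: maps_into_def intro!: sum.cong)
  then show ?thesis by (simp add: sum_list_sum_nth atLeast0LessThan)
qed

lemma sum_list_mset_filter:
  "\<forall>b\<in>set bs. h b < q \<Longrightarrow>
     (\<Sum>j\<leftarrow>[0..<q]. mset (map g (filter (\<lambda>b. h b = j) bs))) = mset (map g bs)"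
proof (induction bs)
  case Nil
  then show ?case by (induction q) auto
next
  case (Cons a bs)
  have "(\<Sum>j\<leftarrow>[0..<q]. mset (map g (filter (\<lambda>b. h b = j) (a # bs)))) =
        (\<Sum>j\<leftarrow>[0..<q]. (if h a = j then {#g a#} else {#})) +
        (\<Sum>j\<leftarrow>[0..<q]. mset (map g (filter (\<lambda>b. h b = j) bs)))"
    by (simp add: sum_list_addf[symmetric], rule arg_cong[where f = sum_list], rule map_cong) auto
  also have "(\<Sum>j\<leftarrow>[0..<q]. (if h a = j then {#g a#} else {#})) = {#g a#}"
    using Cons.prems by (simp add: sum_set_upt_conv_sum_list_nat[symmetric] sum.delta)
  finally show ?case using Cons by simp
qed

lemma refines_fibre_sums:
  assumes h: "maps_into ys xs h" and pos: "\<forall>j<length xs. 0 < fibre_sum ys h j"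
    and ys: "\<forall>y\<in>set ys. 0 < y"
  shows "refines ys (map (fibre_sum ys h) [0..<length xs])"
proof -
  define A where "A j = mset (map (nth ys) (filter (\<lambda>b. h b = j) [0..<length ys]))" for j
  have sum_A: "sum_mset (A j) = fibre_sum ys h j" for j
  proof -
    have "sum_mset (A j) = sum_list (map (nth ys) (filter (\<lambda>b. h b = j) [0..<length ys]))"
      by (simp only: A_def sum_mset_sum_list)
    also have "\<dots> = sum (nth ys) (set (filter (\<lambda>b. h b = j) [0..<length ys]))"
      by (simp add: sum_list_distinct_conv_sum_set)
    also have "set (filter (\<lambda>b. h b = j) [0..<length ys]) = {b. b < length ys \<and> h b = j}"
      by auto
    finally show ?thesis by (simp add: fibre_sum_def)
  qed
  show ?thesis unfolding refines_def
  proof (intro exI[of _ "mset (map A [0..<length xs])"] conjI ballI)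
    show "mset (map (fibre_sum ys h) [0..<length xs]) =
        image_mset sum_mset (mset (map A [0..<length xs]))"
      by (metis (no_types, lifting) map_eq_conv map_map mset_map o_apply sum_A)
    show "A' \<noteq> {#}" if A': "A' \<in># mset (map A [0..<length xs])" for A'
    proof -
      obtain j where "j < length xs" "A' = A j" using A' by auto
      then show ?thesis using pos sum_A by (metis less_irrefl sum_mset.empty)
    qed
    show "0 < y" if "A' \<in># mset (map A [0..<length xs])" "y \<in># A'" for A' y
      using that ys by (auto simp: A_def)
    have "sum_mset (mset (map A [0..<length xs])) = mset (map (nth ys) [0..<length ys])"
      unfolding sum_mset_sum_list A_def
      by (rule sum_list_mset_filter) (use h in \<open>auto simp: maps_into_def\<close>)
    then show "mset ys = sum_mset (mset (map A [0..<length xs]))"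
      by (simp add: map_nth)
  qed
qed

lemma partition_le_iff_dominating_map:
  assumes lam: "is_partition k lam" and lam': "is_partition k' lam'"
  shows "partition_le k lam k' lam' \<longleftrightarrow> (\<exists>h. dominating_map lam lam' h)"
proof
  assume "partition_le k lam k' lam'"
  then obtain lam'' M where lam'': "length lam'' = length lam" "\<forall>i<length lam. lam ! i \<le> lam'' ! i"
    "mset lam'' = image_mset sum_mset M" "mset lam' = sum_mset M"
    unfolding partition_le_def refines_def by blast
  then show "\<exists>h. dominating_map lam lam' h"
    using refines_imp_fibre_map[OF lam''(3,4)] by (auto simp: dominating_map_def maps_into_def)
next
  assume "\<exists>h. dominating_map lam lam' h"
  then obtain h where h: "maps_into lam' lam h" and le: "\<forall>j<length lam. lam ! j \<le> fibre_sum lam' h j"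
    by (auto simp: dominating_map_def)
  define lam'' where "lam'' = map (fibre_sum lam' h) [0..<length lam]"
  have pos: "\<forall>j<length lam. 0 < fibre_sum lam' h j"
    using le lam by (metis is_partition_def nth_mem order_less_le_trans)
  have sum_lam'': "sum_list lam'' = k'"
    using sum_fibre_sum[OF h] lam'
    by (simp add: lam''_def is_partition_def sum_list_sum_nth atLeast0LessThan)
  have "k = (\<Sum>j<length lam. lam ! j)"
    using lam by (simp add: is_partition_def sum_list_sum_nth atLeast0LessThan)
  also have "\<dots> \<le> (\<Sum>j<length lam. fibre_sum lam' h j)"
    using le by (intro sum_mono) auto
  also have "\<dots> = k'"
    using sum_fibre_sum[OF h] lam' by (simp add: is_partition_def)
  finally have "k \<le> k'" .
  moreover have "is_partition k' lam''"
    using sum_lam'' pos by (auto simp: is_partition_def lam''_def)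
  moreover have "refines lam' lam''"
    unfolding lam''_def using refines_fibre_sums[OF h pos] lam' by (simp add: is_partition_def)
  ultimately show "partition_le k lam k' lam'"
    unfolding partition_le_def using le by (intro conjI exI[of _ lam'']) (auto simp: lam''_def)
qed

section \<open>Tracking permutations\<close>

lemma permutes_extending_inj_on:
  assumes "finite I" "D \<subseteq> I" "inj_on g D" "g ` D \<subseteq> I"
  obtains \<pi> where "\<pi> permutes I" "\<forall>c\<in>D. \<pi> c = g c"
proof -
  have "card (I - D) = card (I - g ` D)"
    using assms by (simp add: card_Diff_subset finite_subset card_image)
  then obtain f where f: "bij_betw f (I - D) (I - g ` D)"
    using finite_same_card_bij assms(1) by blast
  define \<pi> where "\<pi> x = (if x \<in> D then g x else if x \<in> I then f x else x)" for x
  have "bij_betw (\<lambda>x. if x \<in> D then g x else f x) (D \<union> (I - D)) (g ` D \<union> (I - g ` D))"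
    by (rule bij_betw_disjoint_Un) (use f assms(3) in \<open>auto simp: inj_on_imp_bij_betw\<close>)
  then have "bij_betw (\<lambda>x. if x \<in> D then g x else f x) I I"
    using assms(2,4) by (simp add: Un_absorb1)
  then have "bij_betw \<pi> I I"
    by (rule bij_betw_cong[THEN iffD1, rotated]) (simp add: \<pi>_def)
  then have "\<pi> permutes I"
    by (rule bij_imp_permutes) (auto simp: \<pi>_def dest: subsetD[OF assms(2)])
  then show thesis by (rule that) (simp add: \<pi>_def)
qed

lemma S_lambda_permutes: "\<pi> \<in> S_lambda k lam \<Longrightarrow> \<pi> permutes {1..k}"
  by (simp add: S_lambda_def)

lemma S_lambda_image_block: "\<pi> \<in> S_lambda k lam \<Longrightarrow> j < length lam \<Longrightarrow> \<pi> ` block lam j = block lam j"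
  by (simp add: S_lambda_def)

lemma S_lambda_inv:
  assumes "\<pi> \<in> S_lambda k lam"
  shows "inv \<pi> \<in> S_lambda k lam"
proof -
  have "inv \<pi> ` block lam j = block lam j" if "j < length lam" for j
  proof -
    have "inv \<pi> ` (\<pi> ` block lam j) = block lam j"
      using permutes_inverses(2)[OF S_lambda_permutes[OF assms]] by (simp add: image_comp)
    then show ?thesis using S_lambda_image_block[OF assms that] by simp
  qed
  then show ?thesis
    using permutes_inv[OF S_lambda_permutes[OF assms]] by (simp add: S_lambda_def)
qed

lemma S_lambda_of_block_permutations:
  assumes perm: "\<forall>j<length lam. \<pi>s j permutes block lam j"
  obtains \<pi> where "\<pi> \<in> S_lambda (sum_list lam) lam" "\<forall>j<length lam. \<forall>c\<in>block lam j. \<pi> c = \<pi>s j c"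
proof -
  define I where "I = {1..sum_list lam}"
  define \<pi> where "\<pi> c = (if c \<in> I then \<pi>s (block_of lam c) c else c)" for c
  have agree: "\<forall>j<length lam. \<forall>c\<in>block lam j. \<pi> c = \<pi>s j c"
  proof (intro allI impI ballI)
    fix j c assume "j < length lam" "c \<in> block lam j"
    then show "\<pi> c = \<pi>s j c"
      using block_subset[of j lam] block_of_eqI[of j lam c] by (auto simp: \<pi>_def I_def)
  qed
  have bij: "bij_betw \<pi> (block lam j) (block lam j)" if j: "j < length lam" for j
  proof -
    have "\<And>c. c \<in> block lam j \<Longrightarrow> \<pi> c = \<pi>s j c"
      using agree j by simp
    then have "bij_betw \<pi> (block lam j) (block lam j) = bij_betw (\<pi>s j) (block lam j) (block lam j)"
      by (rule bij_betw_cong)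
    then show ?thesis
      using perm j by (simp add: permutes_imp_bij)
  qed
  then have "bij_betw \<pi> I I"
    unfolding I_def UN_block[symmetric]
    by (intro bij_betw_UNION_disjoint) (simp_all add: disjoint_family_on_def block_disjoint)
  then have "\<pi> permutes I"
    by (rule bij_imp_permutes) (simp add: \<pi>_def)
  then show thesis
    using agree bij by (intro that) (simp_all add: S_lambda_def I_def bij_betw_def)
qed

definition tracks :: "nat \<Rightarrow> (nat \<Rightarrow> nat) \<Rightarrow> (nat \<Rightarrow> nat) \<Rightarrow> (nat \<Rightarrow> nat) \<Rightarrow> bool" where
  "tracks k \<psi> \<pi>' \<pi> \<longleftrightarrow> (\<forall>c\<in>{1..k}. \<forall>d\<in>{1..k}. \<pi>' (\<psi> c) = \<psi> d \<longrightarrow> \<pi> c = d)"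

lemma tracks_inv:
  assumes "tracks k \<psi> \<pi>' \<pi>" "\<pi>' permutes A" "\<pi> permutes B"
  shows "tracks k \<psi> (inv \<pi>') (inv \<pi>)"
  using assms by (auto simp: tracks_def permutes_inv_eq)

lemma ex_tracking_signature:
  assumes S: "\<forall>\<pi>\<in>S. \<pi> permutes {1..k}" "\<forall>\<pi>\<in>S. inv \<pi> \<in> S"
    and S': "\<forall>\<pi>'\<in>S'. \<pi>' permutes {1..k'}" "\<forall>\<pi>'\<in>S'. \<exists>\<pi>\<in>S. tracks k \<psi> \<pi>' \<pi>"
    and G: "finite_graph V E" and \<sigma>': "signature S' E \<sigma>'"
  obtains \<sigma> where "signature S E \<sigma>" "\<forall>e\<in>E. tracks k \<psi> (\<sigma>' e) (\<sigma> e)"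
proof -
  obtain sel where sel: "\<forall>\<pi>'\<in>S'. sel \<pi>' \<in> S \<and> tracks k \<psi> \<pi>' (sel \<pi>')"
    using S'(2) by metis
  \<comment> \<open>Choose on the arcs going upwards and invert on the reverse arcs.\<close>
  define \<sigma> where "\<sigma> e = (if fst e < snd e then sel (\<sigma>' e) else inv (sel (\<sigma>' (snd e, fst e))))" for e
  have E: "(y, x) \<in> E" "x \<noteq> y" if "(x, y) \<in> E" for x y
    using G that by (auto simp: finite_graph_def)
  have \<sigma>'E: "\<sigma>' (x, y) \<in> S'" "\<sigma>' (y, x) = inv (\<sigma>' (x, y))" if "(x, y) \<in> E" for x y
    using \<sigma>' that by (auto simp: signature_def)
  have arc: "\<sigma> (x, y) \<in> S \<and> \<sigma> (y, x) = inv (\<sigma> (x, y)) \<and> tracks k \<psi> (\<sigma>' (x, y)) (\<sigma> (x, y))"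
    if "(x, y) \<in> E" "x < y" for x y
    using that sel \<sigma>'E[OF that(1)] S(1)
    by (auto simp: \<sigma>_def permutes_inv_inv)
  have "\<sigma> (x, y) \<in> S \<and> \<sigma> (y, x) = inv (\<sigma> (x, y)) \<and> tracks k \<psi> (\<sigma>' (x, y)) (\<sigma> (x, y))"
    if xy: "(x, y) \<in> E" for x y
  proof (cases "x < y")
    case False
    then have yx: "(y, x) \<in> E" "y < x" using E[OF xy] by auto
    have "\<sigma>' (x, y) = inv (\<sigma>' (y, x))" "\<sigma> (x, y) = inv (\<sigma> (y, x))"
      using \<sigma>'E[OF yx(1)] arc[OF yx] by (auto simp: \<sigma>_def)
    moreover have "\<sigma>' (y, x) permutes {1..k'}" "\<sigma> (y, x) permutes {1..k}"
      using S(1) S'(1) \<sigma>'E[OF yx(1)] arc[OF yx] by auto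
    ultimately show ?thesis
      using arc[OF yx] S(2) tracks_inv[of k \<psi> "\<sigma>' (y, x)" "\<sigma> (y, x)"]
      by (simp add: permutes_inv_inv)
  qed (use arc xy in blast)
  then have "\<sigma> e \<in> S \<and> \<sigma> (snd e, fst e) = inv (\<sigma> e) \<and> tracks k \<psi> (\<sigma>' e) (\<sigma> e)" if "e \<in> E" for e
    using that by (cases e) simp
  then show thesis
    by (intro that[of \<sigma>]) (simp_all add: signature_def)
qed

lemma S_colourable_transfer:
  assumes S: "\<forall>\<pi>\<in>S. \<pi> permutes {1..k}" "\<forall>\<pi>\<in>S. inv \<pi> \<in> S"
    and S': "\<forall>\<pi>'\<in>S'. \<pi>' permutes {1..k'}" "\<forall>\<pi>'\<in>S'. \<exists>\<pi>\<in>S. tracks k \<psi> \<pi>' \<pi>"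
    and \<psi>: "\<psi> ` {1..k} \<subseteq> {1..k'}"
    and G: "finite_graph V E" and col: "S_colourable S k V E"
  shows "S_colourable S' k' V E"
  unfolding S_colourable_def
proof (intro allI impI)
  fix \<sigma>' assume "signature S' E \<sigma>'"
  then obtain \<sigma> where \<sigma>: "signature S E \<sigma>" "\<forall>e\<in>E. tracks k \<psi> (\<sigma>' e) (\<sigma> e)"
    using ex_tracking_signature[OF S S' G] by blast
  then obtain f where f: "colouring k V E \<sigma> f"
    using col by (auto simp: S_colourable_def)
  have "colouring k' V E \<sigma>' (\<psi> \<circ> f)" unfolding colouring_def
  proof (intro conjI ballI allI impI)
    fix v assume "v \<in> V"
    then have "f v \<in> {1..k}" using f by (simp add: colouring_def)
    then show "(\<psi> \<circ> f) v \<in> {1..k'}" using \<psi> by (simp add: image_subset_iff)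
  next
    fix x y assume e: "(x, y) \<in> E"
    then have "f x \<in> {1..k}" "f y \<in> {1..k}" "\<sigma> (x, y) (f x) \<noteq> f y"
      using f G by (auto simp: colouring_def finite_graph_def)
    then show "\<sigma>' (x, y) ((\<psi> \<circ> f) x) \<noteq> (\<psi> \<circ> f) y"
      using \<sigma>(2) e by (auto simp: tracks_def)
  qed
  then show "\<exists>f. colouring k' V E \<sigma>' f" by blast
qed

definition merged_block :: "nat list \<Rightarrow> (nat \<Rightarrow> nat) \<Rightarrow> nat \<Rightarrow> nat set" where
  "merged_block lam' h j = (\<Union>b\<in>{b. b < length lam' \<and> h b = j}. block lam' b)"

lemma finite_merged_block [simp]: "finite (merged_block lam' h j)"
  by (simp add: merged_block_def)

lemma card_merged_block: "card (merged_block lam' h j) = fibre_sum lam' h j"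
proof -
  have "card (merged_block lam' h j) = (\<Sum>b | b < length lam' \<and> h b = j. card (block lam' b))"
    unfolding merged_block_def by (rule card_UN_disjoint) (auto dest: block_disjoint)
  then show ?thesis by (simp add: fibre_sum_def card_block)
qed

lemma merged_block_disjoint:
  assumes "i \<noteq> j"
  shows "merged_block lam' h i \<inter> merged_block lam' h j = {}"
proof (rule equals0I)
  fix x assume "x \<in> merged_block lam' h i \<inter> merged_block lam' h j"
  then obtain b1 b2 where "h b1 = i" "h b2 = j" "x \<in> block lam' b1" "x \<in> block lam' b2"
    by (auto simp: merged_block_def)
  then show False using block_disjoint[of b1 b2 lam'] assms by auto
qed

lemma merged_block_subset: "merged_block lam' h j \<subseteq> {1..sum_list lam'}"
  unfolding merged_block_def using block_subset by blast

lemma S_lambda_image_merged_block: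
  assumes "\<pi>' \<in> S_lambda k' lam'"
  shows "\<pi>' ` merged_block lam' h j = merged_block lam' h j"
  unfolding merged_block_def image_UN
  by (rule SUP_cong[OF refl]) (simp add: S_lambda_image_block[OF assms])

lemma ex_block_embedding:
  assumes "dominating_map lam lam' h"
  obtains \<psi> where "\<forall>j<length lam. \<psi> ` block lam j \<subseteq> merged_block lam' h j \<and> inj_on \<psi> (block lam j)"
proof -
  have "\<exists>\<psi>j. \<psi>j ` block lam j \<subseteq> merged_block lam' h j \<and> inj_on \<psi>j (block lam j)"
    if "j < length lam" for j
    using assms that by (intro card_le_inj) (simp_all add: card_block card_merged_block dominating_map_def)
  then obtain \<psi>s where \<psi>s: "\<forall>j<length lam.
      \<psi>s j ` block lam j \<subseteq> merged_block lam' h j \<and> inj_on (\<psi>s j) (block lam j)"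
    by metis
  have "\<forall>c\<in>block lam j. \<psi>s (block_of lam c) c = \<psi>s j c" if "j < length lam" for j
    using that by (simp add: block_of_eqI)
  then show thesis
    using \<psi>s by (intro that[of "\<lambda>c. \<psi>s (block_of lam c) c"]) (auto simp: inj_on_def)
qed

text \<open>Through the injection \<open>\<psi>\<close>, the permutation \<open>\<pi>'\<close> induces a partial injection of \<open>B\<close>,
  which extends to a permutation of \<open>B\<close>.\<close>
lemma ex_permutes_tracking:
  assumes "finite B" "inj_on \<psi> B" "\<pi>' permutes A"
  obtains \<pi> where "\<pi> permutes B" "\<forall>c\<in>B. \<forall>d\<in>B. \<pi>' (\<psi> c) = \<psi> d \<longrightarrow> \<pi> c = d"
proof -
  define D where "D = {c\<in>B. \<pi>' (\<psi> c) \<in> \<psi> ` B}"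
  define g where "g c = inv_into B \<psi> (\<pi>' (\<psi> c))" for c
  have "inj_on g D"
  proof (rule inj_onI)
    fix x y assume xy: "x \<in> D" "y \<in> D" "g x = g y"
    then have "\<pi>' (\<psi> x) = \<pi>' (\<psi> y)"
      unfolding D_def g_def by (metis (no_types, lifting) f_inv_into_f mem_Collect_eq)
    then have "\<psi> x = \<psi> y"
      using assms(3) by (metis permutes_inj injD)
    then show "x = y" using assms(2) xy(1,2) by (auto simp: D_def inj_on_def)
  qed
  moreover have "D \<subseteq> B" "g ` D \<subseteq> B"
    by (auto simp: D_def g_def inv_into_into)
  ultimately obtain \<pi> where \<pi>: "\<pi> permutes B" "\<forall>c\<in>D. \<pi> c = g c"
    using permutes_extending_inj_on[OF assms(1)] by blast
  have "\<pi> c = d" if cd: "c \<in> B" "d \<in> B" "\<pi>' (\<psi> c) = \<psi> d" for c d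
  proof -
    have "c \<in> D" using cd by (auto simp: D_def)
    then show ?thesis using \<pi>(2) cd assms(2) by (simp add: g_def inv_into_f_f)
  qed
  then show thesis using that \<pi>(1) by blast
qed

lemma S_lambda_tracking:
  assumes \<psi>: "\<forall>j<length lam. \<psi> ` block lam j \<subseteq> merged_block lam' h j \<and> inj_on \<psi> (block lam j)"
    and k: "sum_list lam = k" and \<pi>': "\<pi>' \<in> S_lambda k' lam'"
  shows "\<exists>\<pi>\<in>S_lambda k lam. tracks k \<psi> \<pi>' \<pi>"
proof -
  have "\<exists>\<pi>j. \<pi>j permutes block lam j \<and>
      (\<forall>c\<in>block lam j. \<forall>d\<in>block lam j. \<pi>' (\<psi> c) = \<psi> d \<longrightarrow> \<pi>j c = d)" if "j < length lam" for j
  proof -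
    have "inj_on \<psi> (block lam j)" using \<psi> that by blast
    from ex_permutes_tracking[OF finite_block this S_lambda_permutes[OF \<pi>']]
    show ?thesis by blast
  qed
  then obtain \<pi>s where \<pi>s: "\<forall>j<length lam. \<pi>s j permutes block lam j \<and>
      (\<forall>c\<in>block lam j. \<forall>d\<in>block lam j. \<pi>' (\<psi> c) = \<psi> d \<longrightarrow> \<pi>s j c = d)"
    by metis
  then obtain \<pi> where \<pi>: "\<pi> \<in> S_lambda k lam" "\<forall>j<length lam. \<forall>c\<in>block lam j. \<pi> c = \<pi>s j c"
    using S_lambda_of_block_permutations[of lam \<pi>s] k by blast
  have "\<pi> c = d" if c: "c \<in> {1..k}" and d: "d \<in> {1..k}" and eq: "\<pi>' (\<psi> c) = \<psi> d" for c d
  proof -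
    define j where "j = block_of lam c"
    have cj: "j < length lam" "c \<in> block lam j"
      and dj: "block_of lam d < length lam" "d \<in> block lam (block_of lam d)"
      using block_of_less mem_block_block_of c d k by (auto simp: j_def)
    \<comment> \<open>\<open>\<pi>'\<close> keeps the merged blocks, which are disjoint, so \<open>c\<close> and \<open>d\<close> lie in the same block.\<close>
    have "\<psi> d \<in> merged_block lam' h j"
      using \<psi> cj eq S_lambda_image_merged_block[OF \<pi>', of h j] by (metis image_eqI subsetD)
    moreover have "\<psi> d \<in> merged_block lam' h (block_of lam d)"
      using \<psi> dj by blast
    ultimately have "block_of lam d = j"
      using merged_block_disjoint by blast
    then show "\<pi> c = d"
      using \<pi>(2) \<pi>s cj dj eq by simp
  qed
  then show ?thesis using \<pi>(1) unfolding tracks_def by blast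
qed

lemma S_colourable_of_dominating_map:
  assumes "is_partition k lam" "is_partition k' lam'" "dominating_map lam lam' h"
    and "finite_graph V E" "S_colourable (S_lambda k lam) k V E"
  shows "S_colourable (S_lambda k' lam') k' V E"
proof -
  obtain \<psi> where \<psi>: "\<forall>j<length lam. \<psi> ` block lam j \<subseteq> merged_block lam' h j \<and> inj_on \<psi> (block lam j)"
    using ex_block_embedding[OF assms(3)] by blast
  have k: "sum_list lam = k" "sum_list lam' = k'"
    using assms(1,2) by (simp_all add: is_partition_def)
  have \<psi>_range: "\<psi> ` {1..k} \<subseteq> {1..k'}"
  proof
    fix y assume "y \<in> \<psi> ` {1..k}"
    then obtain c where c: "c \<in> {1..sum_list lam}" "y = \<psi> c" using k by auto
    then have "y \<in> merged_block lam' h (block_of lam c)" using \<psi> block_of_less[OF c(1)] mem_block_block_of[OF c(1)] by blast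
    then show "y \<in> {1..k'}" using merged_block_subset k by blast
  qed
  have "\<forall>\<pi>'\<in>S_lambda k' lam'. \<exists>\<pi>\<in>S_lambda k lam. tracks k \<psi> \<pi>' \<pi>"
    using S_lambda_tracking[OF \<psi> k(1)] by blast
  moreover have "\<forall>\<pi>\<in>S_lambda k lam. \<pi> permutes {1..k}" "\<forall>\<pi>\<in>S_lambda k lam. inv \<pi> \<in> S_lambda k lam"
    "\<forall>\<pi>'\<in>S_lambda k' lam'. \<pi>' permutes {1..k'}"
    using S_lambda_permutes S_lambda_inv by blast+
  ultimately show ?thesis
    by (intro S_colourable_transfer[OF _ _ _ _ \<psi>_range assms(4,5)])
qed

primrec prefix_iterate :: "('a list \<Rightarrow> 'a) \<Rightarrow> nat \<Rightarrow> 'a list" where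
  "prefix_iterate f 0 = []"
| "prefix_iterate f (Suc n) = prefix_iterate f n @ [f (prefix_iterate f n)]"

lemma length_prefix_iterate [simp]: "length (prefix_iterate f n) = n"
  by (induction n) auto

lemma take_prefix_iterate: "i \<le> n \<Longrightarrow> take i (prefix_iterate f n) = prefix_iterate f i"
proof (induction n)
  case (Suc n)
  then show ?case
    by (cases "i = Suc n") (simp_all add: le_Suc_eq)
qed simp

lemma nth_prefix_iterate: "i < n \<Longrightarrow> prefix_iterate f n ! i = f (prefix_iterate f i)"
proof -
  assume "i < n"
  then have "prefix_iterate f n ! i = take (Suc i) (prefix_iterate f n) ! i"
    by simp
  also have "\<dots> = f (prefix_iterate f i)"
    using take_prefix_iterate[of "Suc i" n f] \<open>i < n\<close> by (simp add: nth_append)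
  finally show ?thesis .
qed

lemma transpose_in_S_lambda:
  assumes "b < length lam" "x \<in> block lam b" "y \<in> block lam b"
  shows "transpose x y \<in> S_lambda (sum_list lam) lam"
proof -
  have "transpose x y ` block lam b' = block lam b'" if "b' < length lam" for b'
  proof (cases "b' = b")
    case True
    then show ?thesis using permutes_image[OF permutes_swap_id[OF assms(2,3)]] by simp
  next
    case False
    then have "x \<notin> block lam b'" "y \<notin> block lam b'"
      using assms block_disjoint[of b b' lam] by blast+
    then have "\<forall>z\<in>block lam b'. transpose x y z = z"
      by (metis transpose_apply_other)
    then show ?thesis by (simp add: image_cong)
  qed
  moreover have "x \<in> {1..sum_list lam}" "y \<in> {1..sum_list lam}"
    using assms block_subset by blast+
  ultimately show ?thesis by (simp add: S_lambda_def permutes_swap_id)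
qed

lemma signature_arc_inv:
  assumes "signature S E \<sigma>" "\<forall>\<pi>\<in>S. \<pi> permutes A" "(x, y) \<in> E"
  shows "\<sigma> (y, x) b = a \<longleftrightarrow> \<sigma> (x, y) a = b"
proof -
  have "\<sigma> (y, x) = inv (\<sigma> (x, y))" "\<sigma> (x, y) permutes A"
    using assms by (auto simp: signature_def)
  then show ?thesis by (simp add: permutes_inv_eq)
qed

section \<open>Heavy parts and admissible colour sequences\<close>

locale no_dominating_map =
  fixes lam lam' :: "nat list"
  assumes lam_pos: "\<forall>x\<in>set lam. 0 < x" and lam'_pos: "\<forall>x\<in>set lam'. 0 < x"
    and lam_nonempty: "lam \<noteq> []" and lam'_nonempty: "lam' \<noteq> []"
    and not_dominating: "\<not> dominating_map lam lam' h"
begin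

abbreviation "q \<equiv> length lam"
abbreviation "p \<equiv> length lam'"
abbreviation "K \<equiv> sum_list lam'"

text \<open>By pigeonhole,
  a batch contains \<open>K\<close> colours from a single block of \<open>lam'\<close>.\<close>
definition "batch_len = p * K + 1"
definition "batch_class n = (n div batch_len) mod q"
definition "batch_start n = (n div batch_len) * batch_len"

definition occurrences :: "(nat \<Rightarrow> nat) \<Rightarrow> nat \<Rightarrow> nat \<Rightarrow> nat \<Rightarrow> nat" where
  "occurrences c t i b = card {x. x < t \<and> batch_class x = i \<and> block_of lam' (c x) = b}"

text \<open>The threshold \<open>K \<ge> lam' ! b\<close> guarantees enough earlier positions to force every
  colour of the block \<open>b\<close>.\<close>
definition heavy :: "(nat \<Rightarrow> nat) \<Rightarrow> nat \<Rightarrow> nat \<Rightarrow> nat set" where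
  "heavy c t i = {b. b < p \<and> K \<le> occurrences c t i b}"

definition heavy_elsewhere :: "(nat \<Rightarrow> nat) \<Rightarrow> nat \<Rightarrow> nat \<Rightarrow> nat set" where
  "heavy_elsewhere c t j = {b. \<exists>i<q. i \<noteq> j \<and> b \<in> heavy c t i}"

definition heavy_only :: "(nat \<Rightarrow> nat) \<Rightarrow> nat \<Rightarrow> nat \<Rightarrow> nat set" where
  "heavy_only c t j = heavy c t j - heavy_elsewhere c t j"

definition light :: "(nat \<Rightarrow> nat) \<Rightarrow> nat \<Rightarrow> nat \<Rightarrow> bool" where
  "light c t j \<longleftrightarrow> (\<Sum>b\<in>heavy_only c t j. lam' ! b) < lam ! j"

definition blocked_parts :: "(nat \<Rightarrow> nat) \<Rightarrow> nat \<Rightarrow> nat set" where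
  "blocked_parts c n = (let t = batch_start n; j = batch_class n in
     heavy_elsewhere c t j \<union> (if light c t j then heavy_only c t j else {}))"

definition admissible :: "(nat \<Rightarrow> nat) \<Rightarrow> nat \<Rightarrow> bool" where
  "admissible c m \<longleftrightarrow> (\<forall>n<m. c n \<in> {1..K} \<and> block_of lam' (c n) \<notin> blocked_parts c n)"

definition heavy_total :: "(nat \<Rightarrow> nat) \<Rightarrow> nat \<Rightarrow> nat" where
  "heavy_total c t = (\<Sum>i<q. card (heavy c t i))"

text \<open>Each round of \<open>q\<close> batches creates a new heavy pair, and there are at most \<open>q * p\<close>.\<close>
definition "depth = (q * p + 1) * (q * batch_len)"

lemma batch_class_less: "batch_class n < q"
  using lam_nonempty by (simp add: batch_class_def)

lemma batch_start_le: "batch_start n \<le> n"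
  by (simp add: batch_start_def div_times_less_eq_dividend)

lemma batch_index:
  assumes "n \<in> {m * batch_len..<Suc m * batch_len}"
  shows "batch_class n = m mod q" "batch_start n = m * batch_len"
proof -
  have "n div batch_len = m"
    using assms by (intro div_nat_eqI) (simp_all add: mult.commute)
  then show "batch_class n = m mod q" "batch_start n = m * batch_len"
    by (simp_all add: batch_class_def batch_start_def)
qed

lemma lam_pos_nth: "j < q \<Longrightarrow> 0 < lam ! j"
  using lam_pos nth_mem by blast

lemma lam'_le_K: "b < p \<Longrightarrow> lam' ! b \<le> K"
  by (simp add: elem_le_sum_list)

lemma K_pos: "0 < K"
proof -
  have "0 < lam' ! 0" "lam' ! 0 \<le> K"
    using lam'_pos lam'_nonempty lam'_le_K[of 0] by simp_all
  then show ?thesis by simp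
qed

lemma occurrences_mono: "t \<le> t' \<Longrightarrow> occurrences c t i b \<le> occurrences c t' i b"
  unfolding occurrences_def by (rule card_mono) auto

lemma heavy_mono: "t \<le> t' \<Longrightarrow> heavy c t i \<subseteq> heavy c t' i"
  using occurrences_mono[of t t' c i] unfolding heavy_def by (auto intro: order_trans)

lemma heavy_subset: "heavy c t i \<subseteq> {..<p}"
  by (auto simp: heavy_def)

lemma finite_heavy [simp]: "finite (heavy c t i)"
  by (rule finite_subset[OF heavy_subset]) simp

lemma heavy_total_le: "heavy_total c t \<le> q * p"
proof -
  have "heavy_total c t \<le> (\<Sum>i<q. p)"
    unfolding heavy_total_def using card_mono[OF finite_lessThan heavy_subset] by (intro sum_mono) simp
  then show ?thesis by simp
qed

lemma heavy_stable:
  assumes "t0 \<le> t1" "heavy_total c t1 \<le> heavy_total c t0" "i < q" "t0 \<le> t" "t \<le> t1"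
  shows "heavy c t i = heavy c t0 i"
proof -
  have le: "card (heavy c t0 i') \<le> card (heavy c t1 i')" for i'
    using heavy_mono[OF assms(1)] by (simp add: card_mono)
  have "card (heavy c t0 i) = card (heavy c t1 i)"
  proof (rule ccontr)
    assume "card (heavy c t0 i) \<noteq> card (heavy c t1 i)"
    then have "card (heavy c t0 i) < card (heavy c t1 i)"
      using le[of i] by simp
    then have "heavy_total c t0 < heavy_total c t1"
      unfolding heavy_total_def using le assms(3) by (intro sum_strict_mono_ex1) auto
    then show False using assms(2) by simp
  qed
  then have "heavy c t0 i = heavy c t1 i"
    using heavy_mono[OF assms(1)] by (intro card_subset_eq) auto
  then show ?thesis using heavy_mono[OF assms(4)] heavy_mono[OF assms(5)] by blast
qed

lemma heavy_only_disjoint: "i \<noteq> j \<Longrightarrow> i < q \<Longrightarrow> j < q \<Longrightarrow> heavy_only c t i \<inter> heavy_only c t j = {}"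
  unfolding heavy_only_def heavy_elsewhere_def by blast

text \<open>This is where the absence of a dominating map enters: send every part of \<open>lam'\<close>
  that is heavy for exactly one class to that class.\<close>
lemma ex_light_class: "\<exists>j<q. light c t j"
proof -
  define h where "h b = (if \<exists>i<q. b \<in> heavy_only c t i then (SOME i. i < q \<and> b \<in> heavy_only c t i) else 0)" for b
  have h: "h b < q \<and> (b \<in> heavy_only c t i \<longrightarrow> h b = i)" if "i < q" for b i
  proof (cases "\<exists>i<q. b \<in> heavy_only c t i")
    case True
    then have "h b < q \<and> b \<in> heavy_only c t (h b)"
      using someI_ex[OF True] by (simp add: h_def)
    then show ?thesis
      using heavy_only_disjoint[of "h b" i c t] that by blast
  qed (use that in \<open>auto simp: h_def\<close>)
  then have "maps_into lam' lam h"
    using lam_nonempty by (auto simp: maps_into_def)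
  then obtain j where j: "j < q" "fibre_sum lam' h j < lam ! j"
    using not_dominating[of h] by (auto simp: dominating_map_def not_le)
  have "heavy_only c t j \<subseteq> {b. b < p \<and> h b = j}"
    using h[OF j(1)] heavy_subset[of c t j] by (auto simp: heavy_only_def)
  then have "(\<Sum>b\<in>heavy_only c t j. lam' ! b) \<le> fibre_sum lam' h j"
    unfolding fibre_sum_def by (intro sum_mono2) auto
  then show ?thesis using j by (auto simp: light_def)
qed

lemma admissible_avoids_heavy:
  assumes "admissible c m" "n < m" "light c (batch_start n) (batch_class n)"
  shows "block_of lam' (c n) < p" "block_of lam' (c n) \<notin> heavy c (batch_start n) (batch_class n)"
proof -
  have n: "c n \<in> {1..K}" "block_of lam' (c n) \<notin> blocked_parts c n"
    using assms(1,2) by (auto simp: admissible_def)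
  then show "block_of lam' (c n) < p" using block_of_less by blast
  show "block_of lam' (c n) \<notin> heavy c (batch_start n) (batch_class n)"
    using n(2) assms(3) by (auto simp: blocked_parts_def heavy_only_def Let_def)
qed

lemma batch_has_heavy_part:
  assumes "\<forall>a\<in>{t..<t + batch_len}. block_of lam' (c a) < p"
  shows "\<exists>b<p. K \<le> card {a\<in>{t..<t + batch_len}. block_of lam' (c a) = b}"
proof -
  obtain b where b: "b \<in> {..<p}"
    "card {t..<t + batch_len} \<le> card ((\<lambda>a. block_of lam' (c a)) -` {b} \<inter> {t..<t + batch_len}) * card {..<p}"
    using pigeonhole_card[of "\<lambda>a. block_of lam' (c a)" "{t..<t + batch_len}" "{..<p}"] assms lam'_nonempty
    by auto
  define C where "C = card {a\<in>{t..<t + batch_len}. block_of lam' (c a) = b}"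
  have "(\<lambda>a. block_of lam' (c a)) -` {b} \<inter> {t..<t + batch_len} =
      {a\<in>{t..<t + batch_len}. block_of lam' (c a) = b}"
    by auto
  then have "p * K + 1 \<le> C * p"
    using b(2) by (simp only: C_def card_lessThan card_atLeastLessThan batch_len_def)
  have "K \<le> C"
  proof (rule ccontr)
    assume "\<not> K \<le> C"
    then have "C * p \<le> K * p" by (intro mult_le_mono1) simp
    moreover have "K * p = p * K" by (rule mult.commute)
    ultimately show False using \<open>p * K + 1 \<le> C * p\<close> by linarith
  qed
  then show ?thesis using b(1) unfolding C_def by blast
qed

lemma heavy_only_cong:
  "j < q \<Longrightarrow> \<forall>i<q. heavy c t i = heavy c t' i \<Longrightarrow> heavy_only c t j = heavy_only c t' j"
  unfolding heavy_only_def heavy_elsewhere_def by auto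

lemma light_batch_adds_heavy:
  assumes adm: "admissible c depth" and m: "Suc m * batch_len \<le> depth"
    and light: "light c (m * batch_len) (m mod q)"
  shows "heavy c (m * batch_len) (m mod q) \<noteq> heavy c (Suc m * batch_len) (m mod q)"
proof
  define tb j where "tb = m * batch_len" and "j = m mod q"
  assume same: "heavy c (m * batch_len) (m mod q) = heavy c (Suc m * batch_len) (m mod q)"
  have batch: "batch_class n = j" "batch_start n = tb" if "n \<in> {tb..<tb + batch_len}" for n
    using batch_index[of n m] that by (simp_all add: tb_def j_def)
  have avoid: "block_of lam' (c n) < p \<and> block_of lam' (c n) \<notin> heavy c tb j"
    if n: "n \<in> {tb..<tb + batch_len}" for n
  proof -
    have "n < depth"
      using n m by (simp add: tb_def)
    then show ?thesis
      using admissible_avoids_heavy[OF adm] batch[OF n] light by (metis tb_def j_def)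
  qed
  then have "\<forall>a\<in>{tb..<tb + batch_len}. block_of lam' (c a) < p"
    by blast
  from batch_has_heavy_part[OF this]
  obtain b where b: "b < p" "K \<le> card {a\<in>{tb..<tb + batch_len}. block_of lam' (c a) = b}"
    by blast
  have "{a\<in>{tb..<tb + batch_len}. block_of lam' (c a) = b} \<subseteq>
      {x. x < tb + batch_len \<and> batch_class x = j \<and> block_of lam' (c x) = b}"
    using batch(1) by auto
  then have "card {a\<in>{tb..<tb + batch_len}. block_of lam' (c a) = b} \<le> occurrences c (tb + batch_len) j b"
    unfolding occurrences_def by (rule card_mono[rotated]) simp
  then have "b \<in> heavy c (tb + batch_len) j"
    using b by (simp add: heavy_def)
  then have "b \<in> heavy c tb j"
    using same by (simp add: tb_def j_def add.commute)
  have "{a\<in>{tb..<tb + batch_len}. block_of lam' (c a) = b} \<noteq> {}"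
    using b(2) K_pos by (metis card.empty not_le)
  then obtain a where "a \<in> {tb..<tb + batch_len}" "block_of lam' (c a) = b"
    by blast
  then show False using avoid[of a] \<open>b \<in> heavy c tb j\<close> by simp
qed

text \<open>A round of \<open>q\<close> consecutive batches without new heavy pairs would contain a batch of
  a light class, contradicting the previous lemma.\<close>
lemma heavy_total_increases:
  assumes adm: "admissible c depth" and r: "(r + 1) * (q * batch_len) \<le> depth"
  shows "heavy_total c (r * (q * batch_len)) < heavy_total c ((r + 1) * (q * batch_len))"
proof (rule ccontr)
  define t0 where "t0 = r * (q * batch_len)"
  define t1 where "t1 = (r + 1) * (q * batch_len)"
  assume "\<not> ?thesis"
  then have stable: "heavy c t i = heavy c t0 i" if "i < q" "t0 \<le> t" "t \<le> t1" for t i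
    using heavy_stable[of t0 t1 c i t] that by (simp add: t0_def t1_def)
  obtain j where j: "j < q" "light c t0 j"
    using ex_light_class by blast
  define m where "m = r * q + j"
  have "(j + 1) * batch_len \<le> q * batch_len"
    using j(1) by (intro mult_le_mono1) simp
  then have m: "t0 \<le> m * batch_len" "Suc m * batch_len \<le> t1" "m mod q = j"
    using j(1) by (simp_all add: m_def t0_def t1_def algebra_simps)
  have "\<forall>i<q. heavy c (m * batch_len) i = heavy c t0 i"
    using m by (intro allI impI stable) simp_all
  then have "light c (m * batch_len) (m mod q)"
    using j m(3) heavy_only_cong[of j c "m * batch_len" t0] by (simp add: light_def)
  moreover have "Suc m * batch_len \<le> depth"
    using m(2) r by (simp add: t1_def)
  moreover have "heavy c (m * batch_len) j = heavy c (Suc m * batch_len) j"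
    using stable[of j "m * batch_len"] stable[of j "Suc m * batch_len"] j(1) m by simp
  ultimately show False
    using light_batch_adds_heavy[OF adm] m(3) by blast
qed

lemma not_admissible: "\<not> admissible c depth"
proof
  assume adm: "admissible c depth"
  have "r \<le> heavy_total c (r * (q * batch_len))" if "r \<le> q * p + 1" for r
    using that
  proof (induction r)
    case (Suc r)
    have "(r + 1) * (q * batch_len) \<le> depth"
      using Suc.prems unfolding depth_def by (intro mult_le_mono1) simp
    then show ?case
      using heavy_total_increases[OF adm] Suc by fastforce
  qed simp
  then have "q * p + 1 \<le> heavy_total c depth"
    unfolding depth_def by blast
  then show False using heavy_total_le[of c depth] by simp
qed

section \<open>Forcing patterns\<close>

definition blocked_colours :: "(nat \<Rightarrow> nat) \<Rightarrow> nat \<Rightarrow> nat set" where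
  "blocked_colours c n = (\<Union>b\<in>blocked_parts c n. block lam' b)"

text \<open>In the graph below, a word \<open>w\<close> has an arc to its prefix of length \<open>i\<close> whenever
  \<open>g i = Some d\<close>, labelled by the transposition of \<open>w ! i\<close> and \<open>d\<close>; a forcing pattern
  makes these arcs forbid all blocked colours after \<open>w\<close>, while keeping fewer than
  \<open>lam ! j\<close> arcs into positions of the class \<open>j\<close> of \<open>length w\<close>.\<close>
definition forcing_pattern :: "nat list \<Rightarrow> (nat \<Rightarrow> nat option) \<Rightarrow> bool" where
  "forcing_pattern w g \<longleftrightarrow>
     (\<forall>i d. g i = Some d \<longrightarrow> i < length w \<and> d \<in> block lam' (block_of lam' (w ! i))) \<and>
     card {i. g i \<noteq> None \<and> batch_class i = batch_class (length w)} < lam ! batch_class (length w) \<and>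
     blocked_colours (nth w) (length w) \<subseteq> {d. \<exists>i. g i = Some d}"

lemma blocked_parts_subset_heavy:
  "b \<in> blocked_parts c n \<Longrightarrow>
     b \<in> heavy_elsewhere c (batch_start n) (batch_class n) \<or> b \<in> heavy_only c (batch_start n) (batch_class n)"
  by (auto simp: blocked_parts_def Let_def split: if_splits)

lemma blocked_parts_less: "b \<in> blocked_parts c n \<Longrightarrow> b < p"
  using blocked_parts_subset_heavy[of b c n]
  by (auto simp: heavy_elsewhere_def heavy_only_def heavy_def)

lemma sum_blocked_heavy_only_less:
  "(\<Sum>b\<in>blocked_parts c n \<inter> heavy_only c (batch_start n) (batch_class n). lam' ! b)
     < lam ! batch_class n"
proof (cases "light c (batch_start n) (batch_class n)")
  case True
  have "(\<Sum>b\<in>blocked_parts c n \<inter> heavy_only c (batch_start n) (batch_class n). lam' ! b)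
      \<le> (\<Sum>b\<in>heavy_only c (batch_start n) (batch_class n). lam' ! b)"
    by (intro sum_mono2) (auto simp: heavy_only_def)
  then show ?thesis using True by (simp add: light_def)
next
  case False
  then have "blocked_parts c n \<inter> heavy_only c (batch_start n) (batch_class n) = {}"
    by (auto simp: blocked_parts_def heavy_only_def Let_def)
  then show ?thesis using lam_pos_nth batch_class_less by simp
qed

lemma blocked_part_witnesses:
  assumes "b \<in> blocked_parts c n"
  obtains P where "P \<subseteq> {x. x < batch_start n \<and> block_of lam' (c x) = b}" "card P = lam' ! b"
    "b \<notin> heavy_only c (batch_start n) (batch_class n) \<Longrightarrow> \<forall>x\<in>P. batch_class x \<noteq> batch_class n"
proof -
  define t j where "t = batch_start n" and "j = batch_class n"
  obtain i where i: "b \<in> heavy c t i" "b \<notin> heavy_only c t j \<Longrightarrow> i \<noteq> j"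
  proof (cases "b \<in> heavy_only c t j")
    case True
    then show thesis using that[of j] by (simp add: heavy_only_def)
  next
    case False
    then have "b \<in> heavy_elsewhere c t j"
      using blocked_parts_subset_heavy[OF assms] by (simp add: t_def j_def)
    then obtain i where "i \<noteq> j" "b \<in> heavy c t i"
      by (auto simp: heavy_elsewhere_def)
    then show thesis using that[of i] by simp
  qed
  then have "b < p" "K \<le> occurrences c t i b"
    by (simp_all add: heavy_def)
  then have "lam' ! b \<le> card {x. x < t \<and> batch_class x = i \<and> block_of lam' (c x) = b}"
    using lam'_le_K[of b] unfolding occurrences_def by linarith
  then obtain P where "P \<subseteq> {x. x < t \<and> batch_class x = i \<and> block_of lam' (c x) = b}"
    "card P = lam' ! b"
    by (rule obtain_subset_with_card_n)
  then show thesis using i(2) by (intro that) (auto simp: t_def j_def)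
qed

text \<open>Only the witnesses of parts that are heavy for the class of \<open>n\<close> alone lie in that class.\<close>
lemma card_witnesses_in_class:
  assumes P: "\<And>b. b \<in> blocked_parts c n \<Longrightarrow> finite (P b) \<and> card (P b) = lam' ! b \<and>
      (b \<notin> heavy_only c (batch_start n) (batch_class n) \<longrightarrow> (\<forall>x\<in>P b. batch_class x \<noteq> batch_class n))"
  shows "card {i\<in>\<Union>b\<in>blocked_parts c n. P b. batch_class i = batch_class n} < lam ! batch_class n"
proof -
  let ?B = "blocked_parts c n \<inter> heavy_only c (batch_start n) (batch_class n)"
  have "finite ?B" by (simp add: heavy_only_def)
  then have finite_UN: "finite (\<Union>b\<in>?B. P b)" using P by blast
  have "{i\<in>\<Union>b\<in>blocked_parts c n. P b. batch_class i = batch_class n} \<subseteq> (\<Union>b\<in>?B. P b)"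
    using P by blast
  then have "card {i\<in>\<Union>b\<in>blocked_parts c n. P b. batch_class i = batch_class n} \<le> card (\<Union>b\<in>?B. P b)"
    by (rule card_mono[OF finite_UN])
  also have "\<dots> \<le> (\<Sum>b\<in>?B. card (P b))"
    by (rule card_UN_le) fact
  also have "\<dots> = (\<Sum>b\<in>?B. lam' ! b)"
    using P by (intro sum.cong) auto
  also have "\<dots> < lam ! batch_class n"
    by (rule sum_blocked_heavy_only_less)
  finally show ?thesis .
qed

lemma ex_forcing_set:
  obtains Q \<phi> where "Q \<subseteq> {..<batch_start n}" "\<forall>i\<in>Q. \<phi> i \<in> block lam' (block_of lam' (c i))"
    "card {i\<in>Q. batch_class i = batch_class n} < lam ! batch_class n" "blocked_colours c n \<subseteq> \<phi> ` Q"
proof -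
  define t j where "t = batch_start n" and "j = batch_class n"
  have "\<forall>b\<in>blocked_parts c n. \<exists>P. P \<subseteq> {x. x < t \<and> block_of lam' (c x) = b} \<and> card P = lam' ! b \<and>
      (b \<notin> heavy_only c t j \<longrightarrow> (\<forall>x\<in>P. batch_class x \<noteq> j))"
    using blocked_part_witnesses unfolding t_def j_def by metis
  then obtain P where P: "\<And>b. b \<in> blocked_parts c n \<Longrightarrow>
      P b \<subseteq> {x. x < t \<and> block_of lam' (c x) = b} \<and> card (P b) = lam' ! b \<and>
      (b \<notin> heavy_only c t j \<longrightarrow> (\<forall>x\<in>P b. batch_class x \<noteq> j))"
    by metis
  have finite_P: "finite (P b)" if "b \<in> blocked_parts c n" for b
    using P[OF that] finite_subset[of "P b" "{..<t}"] by auto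
  have "\<forall>b\<in>blocked_parts c n. \<exists>\<phi>. bij_betw \<phi> (P b) (block lam' b)"
    using P finite_P card_block blocked_parts_less by (metis finite_block finite_same_card_bij)
  then obtain \<phi> where \<phi>: "\<And>b. b \<in> blocked_parts c n \<Longrightarrow> bij_betw (\<phi> b) (P b) (block lam' b)"
    by metis
  define Q where "Q = (\<Union>b\<in>blocked_parts c n. P b)"
  have Q: "\<exists>b\<in>blocked_parts c n. i \<in> P b \<and> block_of lam' (c i) = b" if "i \<in> Q" for i
    using that P by (auto simp: Q_def)
  have "Q \<subseteq> {..<t}"
    using P by (auto simp: Q_def)
  moreover have "\<phi> (block_of lam' (c i)) i \<in> block lam' (block_of lam' (c i))" if "i \<in> Q" for i
    using Q[OF that] \<phi> by (auto simp: bij_betw_def)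
  moreover have "card {i\<in>Q. batch_class i = j} < lam ! j"
    using P finite_P unfolding Q_def t_def j_def by (intro card_witnesses_in_class) blast
  moreover have "blocked_colours c n \<subseteq> (\<lambda>i. \<phi> (block_of lam' (c i)) i) ` Q"
  proof
    fix d assume "d \<in> blocked_colours c n"
    then obtain b where b: "b \<in> blocked_parts c n" "d \<in> block lam' b"
      by (auto simp: blocked_colours_def)
    moreover have "\<phi> b ` P b = block lam' b"
      using \<phi>[OF b(1)] by (simp add: bij_betw_def)
    ultimately obtain i where "i \<in> P b" "\<phi> b i = d"
      by (metis imageE)
    then show "d \<in> (\<lambda>i. \<phi> (block_of lam' (c i)) i) ` Q"
      using b(1) P[OF b(1)] by (force simp: Q_def)
  qed
  ultimately show thesis
    by (intro that[of Q "\<lambda>i. \<phi> (block_of lam' (c i)) i"]) (simp_all add: t_def j_def)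
qed

lemma ex_forcing_pattern: "\<exists>g. forcing_pattern w g"
proof -
  obtain Q \<phi> where Q: "Q \<subseteq> {..<batch_start (length w)}"
    "\<forall>i\<in>Q. \<phi> i \<in> block lam' (block_of lam' (w ! i))"
    "card {i\<in>Q. batch_class i = batch_class (length w)} < lam ! batch_class (length w)"
    "blocked_colours (nth w) (length w) \<subseteq> \<phi> ` Q"
    by (rule ex_forcing_set[of "length w" "nth w"])
  define g where "g i = (if i \<in> Q then Some (\<phi> i) else None)" for i
  have "{i. g i \<noteq> None \<and> batch_class i = batch_class (length w)} =
      {i\<in>Q. batch_class i = batch_class (length w)}"
    by (auto simp: g_def)
  moreover have "\<phi> ` Q \<subseteq> {d. \<exists>i. g i = Some d}"
    by (auto simp: g_def)
  moreover have "i < length w \<and> d \<in> block lam' (block_of lam' (w ! i))" if "g i = Some d" for i d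
  proof -
    have "i \<in> Q" "d = \<phi> i"
      using that by (simp_all add: g_def split: if_splits)
    then show ?thesis
      using Q(1,2) batch_start_le[of "length w"] by auto
  qed
  ultimately have "forcing_pattern w g"
    using Q(3,4) unfolding forcing_pattern_def by auto
  then show ?thesis by blast
qed

definition forcing :: "nat list \<Rightarrow> nat \<Rightarrow> nat option" where
  "forcing w = (SOME g. forcing_pattern w g)"

lemma forcing_pattern_forcing: "forcing_pattern w (forcing w)"
  unfolding forcing_def using ex_forcing_pattern by (rule someI_ex)

lemma forcing_SomeD: "forcing w i = Some d \<Longrightarrow> i < length w \<and> d \<in> block lam' (block_of lam' (w ! i))"
  using forcing_pattern_forcing[of w] unfolding forcing_pattern_def by blast

section \<open>The separating graph\<close>

definition words :: "nat list set" where
  "words = {w. set w \<subseteq> {1..K} \<and> length w < depth}"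

definition back_arcs :: "(nat list \<times> nat list) set" where
  "back_arcs = {(u, w). w \<in> words \<and> length u < length w \<and> u = take (length u) w \<and>
     forcing w (length u) \<noteq> None}"

text \<open>The graph lives on \<open>nat\<close>, so words are encoded by \<open>to_nat\<close>.\<close>
definition vertices :: "nat set" where
  "vertices = to_nat ` words"

definition edges :: "(nat \<times> nat) set" where
  "edges = map_prod to_nat to_nat ` (back_arcs \<union> back_arcs\<inverse>)"

lemma finite_words: "finite words"
proof (rule finite_subset)
  show "words \<subseteq> {xs. set xs \<subseteq> {1..K} \<and> length xs \<le> depth}"
    by (auto simp: words_def)
qed (rule finite_lists_length_le, simp)

lemma back_arcsD:
  assumes "(u, w) \<in> back_arcs"
  shows "u \<in> words" "w \<in> words" "length u < length w" "u = take (length u) w"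
    "forcing w (length u) \<noteq> None"
proof -
  show w: "w \<in> words" and "length u < length w" and u: "u = take (length u) w"
    and "forcing w (length u) \<noteq> None"
    using assms by (auto simp: back_arcs_def)
  have "set u \<subseteq> set w"
    using u set_take_subset by metis
  then show "u \<in> words"
    using w \<open>length u < length w\<close> by (auto simp: words_def)
qed

lemma finite_graph: "finite_graph vertices edges"
  unfolding finite_graph_def
proof (intro conjI allI impI)
  show "finite vertices"
    using finite_words by (simp add: vertices_def)
  show "edges \<subseteq> vertices \<times> vertices"
    using back_arcsD(1,2) by (fastforce simp: edges_def vertices_def)
  show "(y, x) \<in> edges" if "(x, y) \<in> edges" for x y
    using that by (force simp: edges_def)
  show "(x, x) \<notin> edges" for x
  proof
    assume "(x, x) \<in> edges"
    then obtain u w where "(u, w) \<in> back_arcs \<union> back_arcs\<inverse>" "to_nat u = to_nat w"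
      by (auto simp: edges_def)
    then show False using back_arcsD(3) by auto
  qed
qed

definition back_perm :: "nat list \<Rightarrow> nat \<Rightarrow> nat \<Rightarrow> nat" where
  "back_perm w i = (case forcing w i of Some d \<Rightarrow> transpose (w ! i) d | None \<Rightarrow> id)"

definition arc_perm :: "nat list \<Rightarrow> nat list \<Rightarrow> nat \<Rightarrow> nat" where
  "arc_perm u w = (if length u < length w then back_perm w (length u) else back_perm u (length w))"

lemma back_perm_beyond: "length w \<le> i \<Longrightarrow> back_perm w i = id"
  using forcing_SomeD[of w i] by (auto simp: back_perm_def split: option.split)

lemma arc_perm_commute: "arc_perm u w = arc_perm w u"
  using back_perm_beyond by (auto simp: arc_perm_def)

lemma inv_arc_perm: "inv (arc_perm u w) = arc_perm u w"
  by (simp add: arc_perm_def back_perm_def split: option.split)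

lemma arc_perm_in_S_lambda:
  assumes "(u, w) \<in> back_arcs"
  shows "arc_perm u w \<in> S_lambda K lam'"
proof -
  obtain d where d: "forcing w (length u) = Some d" and w: "w \<in> words" "length u < length w"
    using back_arcsD[OF assms] by auto
  have "w ! length u \<in> {1..K}"
    using w by (auto simp: words_def dest: nth_mem)
  moreover have "d \<in> block lam' (block_of lam' (w ! length u))"
    using forcing_SomeD[OF d] by simp
  ultimately have "transpose (w ! length u) d \<in> S_lambda K lam'"
    using block_of_less mem_block_block_of transpose_in_S_lambda by blast
  then show ?thesis using d w by (simp add: arc_perm_def back_perm_def)
qed

definition arc_signature :: "nat \<times> nat \<Rightarrow> nat \<Rightarrow> nat" where
  "arc_signature e = arc_perm (from_nat (fst e)) (from_nat (snd e))"

lemma signature_arc_signature: "signature (S_lambda K lam') edges arc_signature"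
  unfolding signature_def
proof
  fix e assume "e \<in> edges"
  then obtain u w where uw: "(u, w) \<in> back_arcs \<or> (w, u) \<in> back_arcs" "e = (to_nat u, to_nat w)"
    by (auto simp: edges_def)
  then have "arc_signature e = arc_perm u w" "arc_signature (snd e, fst e) = arc_perm u w"
    by (simp_all add: arc_signature_def arc_perm_commute)
  then show "arc_signature e \<in> S_lambda K lam' \<and> arc_signature (snd e, fst e) = inv (arc_signature e)"
    using uw(1) arc_perm_in_S_lambda arc_perm_commute inv_arc_perm by metis
qed

lemma blocked_parts_cong:
  assumes "\<forall>x<n. c x = c' x"
  shows "blocked_parts c n = blocked_parts c' n"
proof -
  have "occurrences c (batch_start n) = occurrences c' (batch_start n)"
    using assms batch_start_le[of n] unfolding occurrences_def
    by (intro ext arg_cong[where f = card]) auto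
  then have "heavy c (batch_start n) = heavy c' (batch_start n)"
    by (simp add: heavy_def fun_eq_iff)
  then show ?thesis
    by (simp add: blocked_parts_def heavy_only_def heavy_elsewhere_def light_def Let_def)
qed

lemma prefix_iterate_in_words:
  assumes "\<forall>w\<in>words. f w \<in> {1..K}" "n < depth"
  shows "prefix_iterate f n \<in> words"
  using assms(2)
proof (induction n)
  case (Suc n)
  then have "prefix_iterate f n \<in> words" by simp
  then show ?case using Suc.prems assms(1) by (simp add: words_def)
qed (simp add: words_def)

text \<open>A blocked colour at position \<open>n\<close> would violate the arc to the prefix that forces it,
  whose label swaps the colour of that prefix with the blocked colour.\<close>
lemma admissible_of_colouring:
  fixes F :: "nat \<Rightarrow> nat"
  assumes F: "colouring K vertices edges arc_signature F"
  defines "f \<equiv> \<lambda>u. F (to_nat u)"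
  shows "admissible (\<lambda>i. f (prefix_iterate f i)) depth"
proof -
  define c where "c i = f (prefix_iterate f i)" for i
  have f_range: "\<forall>w\<in>words. f w \<in> {1..K}"
    using F by (simp add: colouring_def vertices_def f_def)
  then have word: "prefix_iterate f n \<in> words" "c n \<in> {1..K}" if "n < depth" for n
    using prefix_iterate_in_words that by (simp_all add: c_def)
  have "block_of lam' (c n) \<notin> blocked_parts c n" if n: "n < depth" for n
  proof
    let ?w = "prefix_iterate f n"
    assume "block_of lam' (c n) \<in> blocked_parts c n"
    moreover have "blocked_parts c n = blocked_parts (nth ?w) n"
      by (rule blocked_parts_cong) (simp add: c_def nth_prefix_iterate)
    ultimately have "c n \<in> blocked_colours (nth ?w) (length ?w)"
      using mem_block_block_of word[OF n] by (auto simp: blocked_colours_def)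
    then obtain i where i: "forcing ?w i = Some (c n)"
      using forcing_pattern_forcing[of ?w] unfolding forcing_pattern_def by blast
    then have "i < n" using forcing_SomeD by fastforce
    then have "(prefix_iterate f i, ?w) \<in> back_arcs"
      using word[OF n] i by (auto simp: back_arcs_def take_prefix_iterate)
    then have "(to_nat (prefix_iterate f i), to_nat ?w) \<in> edges"
      by (force simp: edges_def)
    moreover have "arc_signature (to_nat (prefix_iterate f i), to_nat ?w) = transpose (c i) (c n)"
      using i \<open>i < n\<close> by (simp add: arc_signature_def arc_perm_def back_perm_def nth_prefix_iterate c_def)
    ultimately have "transpose (c i) (c n) (c i) \<noteq> c n"
      using F unfolding colouring_def f_def c_def by metis
    then show False by simp
  qed
  moreover have "(\<lambda>i. f (prefix_iterate f i)) = c"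
    by (simp add: c_def fun_eq_iff)
  ultimately show ?thesis
    using word by (simp add: admissible_def)
qed

lemma not_S_colourable_lam': "\<not> S_colourable (S_lambda K lam') K vertices edges"
proof
  assume "S_colourable (S_lambda K lam') K vertices edges"
  then obtain F where "colouring K vertices edges arc_signature F"
    using signature_arc_signature by (auto simp: S_colourable_def)
  then show False
    using admissible_of_colouring not_admissible by blast
qed

lemma card_back_arcs_class:
  "card {u. (u, w) \<in> back_arcs \<and> batch_class (length u) = j}
     \<le> card {i. forcing w i \<noteq> None \<and> batch_class i = j}"
proof (rule card_inj_on_le)
  show "inj_on length {u. (u, w) \<in> back_arcs \<and> batch_class (length u) = j}"
  proof (rule inj_onI)
    fix u1 u2
    assume "u1 \<in> {u. (u, w) \<in> back_arcs \<and> batch_class (length u) = j}"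
      "u2 \<in> {u. (u, w) \<in> back_arcs \<and> batch_class (length u) = j}" "length u1 = length u2"
    then show "u1 = u2" using back_arcsD(4) by (metis mem_Collect_eq)
  qed
  show "length ` {u. (u, w) \<in> back_arcs \<and> batch_class (length u) = j}
      \<subseteq> {i. forcing w i \<noteq> None \<and> batch_class i = j}"
    using back_arcsD(5) by blast
  have "{i. forcing w i \<noteq> None \<and> batch_class i = j} \<subseteq> {..<length w}"
  proof
    fix i assume "i \<in> {i. forcing w i \<noteq> None \<and> batch_class i = j}"
    then obtain d where "forcing w i = Some d" by auto
    then show "i \<in> {..<length w}" using forcing_SomeD by simp
  qed
  then show "finite {i. forcing w i \<noteq> None \<and> batch_class i = j}"
    using finite_subset by blast
qed

definition proper_below :: "(nat list \<Rightarrow> nat list \<Rightarrow> nat \<Rightarrow> nat) \<Rightarrow> nat \<Rightarrow> (nat list \<Rightarrow> nat) \<Rightarrow> bool" where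
  "proper_below \<tau> m f \<longleftrightarrow> (\<forall>w\<in>words. length w < m \<longrightarrow>
     f w \<in> block lam (batch_class (length w)) \<and> (\<forall>u. (u, w) \<in> back_arcs \<longrightarrow> \<tau> u w (f u) \<noteq> f w))"

text \<open>Only arcs from words of the same class can forbid a colour of the class-\<open>j\<close> block,
  and there are fewer than \<open>lam ! j\<close> of them.\<close>
lemma ex_free_colour:
  assumes \<tau>: "\<And>u w. (u, w) \<in> back_arcs \<Longrightarrow> \<tau> u w \<in> S_lambda (sum_list lam) lam"
    and f: "proper_below \<tau> (length w) f" and w: "w \<in> words"
  shows "\<exists>col\<in>block lam (batch_class (length w)). \<forall>u. (u, w) \<in> back_arcs \<longrightarrow> \<tau> u w (f u) \<noteq> col"
proof -
  define j where "j = batch_class (length w)"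
  define U where "U = {u. (u, w) \<in> back_arcs \<and> batch_class (length u) = j}"
  have "finite U"
    using finite_words back_arcsD(1) finite_subset[of U words] by (auto simp: U_def)
  then have "card ((\<lambda>u. \<tau> u w (f u)) ` U) \<le> card U"
    by (rule card_image_le)
  also have "\<dots> < lam ! j"
    using card_back_arcs_class[of w j] forcing_pattern_forcing[of w]
    unfolding forcing_pattern_def U_def j_def by linarith
  also have "\<dots> = card (block lam j)"
    using card_block batch_class_less by (simp add: j_def)
  finally have less: "card ((\<lambda>u. \<tau> u w (f u)) ` U) < card (block lam j)" .
  have "\<not> block lam j \<subseteq> (\<lambda>u. \<tau> u w (f u)) ` U"
  proof
    assume "block lam j \<subseteq> (\<lambda>u. \<tau> u w (f u)) ` U"
    then have "card (block lam j) \<le> card ((\<lambda>u. \<tau> u w (f u)) ` U)"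
      using \<open>finite U\<close> by (intro card_mono) simp_all
    then show False using less by simp
  qed
  then obtain col where col: "col \<in> block lam j" "col \<notin> (\<lambda>u. \<tau> u w (f u)) ` U"
    by blast
  have "\<tau> u w (f u) \<noteq> col" if u: "(u, w) \<in> back_arcs" for u
  proof (cases "batch_class (length u) = j")
    case False
    have "f u \<in> block lam (batch_class (length u))"
      using f u back_arcsD[OF u] by (simp add: proper_below_def)
    then have "\<tau> u w (f u) \<in> block lam (batch_class (length u))"
      using S_lambda_image_block[OF \<tau>[OF u] batch_class_less] by blast
    then show ?thesis using col(1) block_disjoint[OF False] by blast
  qed (use col(2) u in \<open>auto simp: U_def\<close>)
  then show ?thesis using col(1) by (auto simp: j_def)
qed

lemma ex_proper_below:
  fixes \<tau> :: "nat list \<Rightarrow> nat list \<Rightarrow> nat \<Rightarrow> nat"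
  assumes \<tau>: "\<And>u w. (u, w) \<in> back_arcs \<Longrightarrow> \<tau> u w \<in> S_lambda (sum_list lam) lam"
  shows "\<exists>f. proper_below \<tau> m f"
proof (induction m)
  case 0
  then show ?case by (simp add: proper_below_def)
next
  case (Suc m)
  then obtain f where f: "proper_below \<tau> m f" by blast
  define free_colour where "free_colour w col \<longleftrightarrow>
    col \<in> block lam (batch_class m) \<and> (\<forall>u. (u, w) \<in> back_arcs \<longrightarrow> \<tau> u w (f u) \<noteq> col)" for w col
  define f' where "f' w = (if w \<in> words \<and> length w = m then SOME col. free_colour w col else f w)" for w
  have "proper_below \<tau> (Suc m) f'" unfolding proper_below_def
  proof (intro ballI impI)
    fix w assume w: "w \<in> words" "length w < Suc m"
    have pred: "f' u = f u" if "(u, w) \<in> back_arcs" for u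
      using back_arcsD(3)[OF that] w(2) by (simp add: f'_def)
    show "f' w \<in> block lam (batch_class (length w)) \<and> (\<forall>u. (u, w) \<in> back_arcs \<longrightarrow> \<tau> u w (f' u) \<noteq> f' w)"
    proof (cases "length w = m")
      case True
      then have "\<exists>col. free_colour w col"
        using ex_free_colour[of \<tau> w f, OF \<tau>] f w(1) unfolding free_colour_def by blast
      then have "free_colour w (f' w)"
        using True w(1) by (simp add: f'_def someI_ex)
      then show ?thesis using pred True by (simp add: free_colour_def)
    next
      case False
      then have "length w < m" "f' w = f w" using w by (auto simp: f'_def)
      then show ?thesis using f w(1) pred by (simp add: proper_below_def)
    qed
  qed
  then show ?case by blast
qed

text \<open>Every edge comes from a back arc, and the constraint on the reverse arc is equivalent.\<close>
lemma colouring_of_back_arcs: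
  assumes \<sigma>: "signature S edges \<sigma>" "\<forall>\<pi>\<in>S. \<pi> permutes A"
    and range: "\<forall>w\<in>words. F (to_nat w) \<in> {1..k}"
    and proper: "\<And>u w. (u, w) \<in> back_arcs \<Longrightarrow> \<sigma> (to_nat u, to_nat w) (F (to_nat u)) \<noteq> F (to_nat w)"
  shows "colouring k vertices edges \<sigma> F"
  unfolding colouring_def
proof (intro conjI ballI allI impI)
  show "F v \<in> {1..k}" if "v \<in> vertices" for v
    using that range by (auto simp: vertices_def)
next
  fix x y assume e: "(x, y) \<in> edges"
  then obtain u w where uw: "(u, w) \<in> back_arcs \<or> (w, u) \<in> back_arcs"
    and xy: "x = to_nat u" "y = to_nat w"
    by (auto simp: edges_def)
  show "\<sigma> (x, y) (F x) \<noteq> F y"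
  proof (cases "(u, w) \<in> back_arcs")
    case True
    then show ?thesis using proper xy by simp
  next
    case False
    then have "\<sigma> (y, x) (F y) \<noteq> F x" using uw proper xy by simp
    then show ?thesis using signature_arc_inv[OF \<sigma> e] by simp
  qed
qed

lemma S_colourable_lam: "S_colourable (S_lambda (sum_list lam) lam) (sum_list lam) vertices edges"
  unfolding S_colourable_def
proof (intro allI impI)
  fix \<sigma> assume \<sigma>: "signature (S_lambda (sum_list lam) lam) edges \<sigma>"
  define \<tau> where "\<tau> u w = \<sigma> (to_nat u, to_nat w)" for u w :: "nat list"
  have "\<tau> u w \<in> S_lambda (sum_list lam) lam" if "(u, w) \<in> back_arcs" for u w
    using \<sigma> that by (force simp: signature_def \<tau>_def edges_def)
  then obtain f where f: "proper_below \<tau> depth f"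
    using ex_proper_below by blast
  have "f w \<in> {1..sum_list lam}" if "w \<in> words" for w
  proof -
    have "f w \<in> block lam (batch_class (length w))"
      using f that by (simp add: proper_below_def words_def)
    then show ?thesis using block_subset[OF batch_class_less] by blast
  qed
  moreover have "\<tau> u w (f u) \<noteq> f w" if "(u, w) \<in> back_arcs" for u w
    using f back_arcsD[OF that] that by (simp add: proper_below_def words_def)
  moreover have "\<forall>\<pi>\<in>S_lambda (sum_list lam) lam. \<pi> permutes {1..sum_list lam}"
    using S_lambda_permutes by blast
  ultimately have "colouring (sum_list lam) vertices edges \<sigma> (f \<circ> from_nat)"
    using \<sigma> by (intro colouring_of_back_arcs) (auto simp: \<tau>_def)
  then show "\<exists>F. colouring (sum_list lam) vertices edges \<sigma> F" by blast
qed

end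

lemma ex_separating_graph:
  assumes "is_partition k lam" "is_partition k' lam'" "0 < k" "0 < k'"
    and "\<not> partition_le k lam k' lam'"
  shows "\<exists>V E. finite_graph V E \<and> S_colourable (S_lambda k lam) k V E \<and>
    \<not> S_colourable (S_lambda k' lam') k' V E"
proof -
  have "no_dominating_map lam lam'"
    using assms partition_le_iff_dominating_map[OF assms(1,2)]
    by unfold_locales (auto simp: is_partition_def)
  then interpret no_dominating_map lam lam' .
  have "sum_list lam = k" "sum_list lam' = k'"
    using assms(1,2) by (simp_all add: is_partition_def)
  then show ?thesis
    using finite_graph S_colourable_lam not_S_colourable_lam' by blast
qed

theorem corollary17:
  assumes "is_partition k lam" and "is_partition k' lam'"
    and "0 < k" and "0 < k'"
  shows "(\<forall>V E. finite_graph V E \<longrightarrow>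
            S_colourable (S_lambda k lam) k V E \<longrightarrow> S_colourable (S_lambda k' lam') k' V E)
         \<longleftrightarrow> partition_le k lam k' lam'"
proof
  assume "\<forall>V E. finite_graph V E \<longrightarrow>
      S_colourable (S_lambda k lam) k V E \<longrightarrow> S_colourable (S_lambda k' lam') k' V E"
  then show "partition_le k lam k' lam'"
    using ex_separating_graph[OF assms] by blast
next
  assume "partition_le k lam k' lam'"
  then obtain h where "dominating_map lam lam' h"
    using partition_le_iff_dominating_map[OF assms(1,2)] by blast
  then show "\<forall>V E. finite_graph V E \<longrightarrow>
      S_colourable (S_lambda k lam) k V E \<longrightarrow> S_colourable (S_lambda k' lam') k' V E"
    using S_colourable_of_dominating_map[OF assms(1,2)] by blast
qed

end
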